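(* Let $X,Y$ be complex Banach spaces, let $\emptyset\ne I\subseteq\mathbb R^n$ be closed with $I+I\subseteq I$, let $\mathcal B$ be a family of compact subsets of $X$ such that every $x\in X$ belongs to some $B\in\mathcal B$, and let $F:I\times X\to Y$ be Bohr $\mathcal B$-almost periodic. Suppose that: for every $l>0$ there exist $\mathbf t_0\in I$ and $k>0$ such that for every $\mathbf t\in I$ there exists $\mathbf t_0'\in I$ such that for every $\mathbf t_0''\in B(\mathbf t_0',l)\cap I$ we have $\mathbf t-\mathbf t_0''\in B(\mathbf t_0,kl)\cap I$. Then for each $B\in\mathcal B$ the set $\{F(\mathbf t;x):\mathbf t\in I,\ x\in B\}$ is relatively compact in $Y$; in particular $\sup_{\mathbf t\in I,x\in B}\|F(\mathbf t;x)\|_Y<\infty$.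
   Context: $B(\mathbf t_0,l)=\{\mathbf t\in\mathbb R^n:|\mathbf t-\mathbf t_0|\le l\}$ (Euclidean norm). For $I$ with $I+I\subseteq I$, a continuous $F:I\times X\to Y$ is Bohr $\mathcal B$-almost periodic if for every $B\in\mathcal B$ and $\epsilon>0$ there exists $l>0$ such that for each $\mathbf t_0\in I$ there exists $\tau\in B(\mathbf t_0,l)\cap I$ with $\|F(\mathbf t+\tau;x)-F(\mathbf t;x)\|_Y\le\epsilon$ for all $\mathbf t\in I$, $x\in B$. *)

theory Defs
  imports "HOL-Analysis.Analysis"
begin

definition bohr_B_almost_periodic ::
  "(real^'n) set \<Rightarrow> 'x::real_normed_vector set set \<Rightarrow> (real^'n \<Rightarrow> 'x \<Rightarrow> 'y::real_normed_vector) \<Rightarrow> bool"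
where
  "bohr_B_almost_periodic I \<B> F \<longleftrightarrow>
     continuous_on (I \<times> UNIV) (\<lambda>(t, x). F t x) \<and>
     (\<forall>B\<in>\<B>. \<forall>\<epsilon>>0. \<exists>l>0. \<forall>t0\<in>I. \<exists>\<tau>\<in>cball t0 l \<inter> I.
        \<forall>t\<in>I. \<forall>x\<in>B. norm (F (t + \<tau>) x - F t x) \<le> \<epsilon>)"

end

theory Submission
  imports Defs
begin

text \<open>Given \<open>\<epsilon> > 0\<close>, take the inclusion length \<open>l\<close> of \<open>\<epsilon>\<close>-almost periods and the window
  \<open>T = cball t\<^sub>0 (k l) \<inter> I\<close> provided by the hypothesis for this \<open>l\<close>. For \<open>t \<in> I\<close> pick an
  \<open>\<epsilon>\<close>-almost period \<open>\<tau>\<close> near the point \<open>t\<^sub>0'\<close> attached to \<open>t\<close>; then \<open>t - \<tau> \<in> T\<close>, so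
  \<open>F(t; x)\<close> lies within \<open>\<epsilon>\<close> of the compact set \<open>F(T \<times> B)\<close>. A set lying within every
  \<open>\<epsilon> > 0\<close> of some compact set is totally bounded, hence relatively compact in the Banach
  space \<open>Y\<close>.\<close>

lemma compact_closure_if_near_compacts:
  fixes S :: "'a::complete_space set"
  assumes near: "\<And>e. e > 0 \<Longrightarrow> \<exists>C. compact C \<and> (\<forall>z\<in>S. \<exists>c\<in>C. dist z c \<le> e)"
  shows "compact (closure S)"
proof -
  have "\<exists>k. finite k \<and> closure S \<subseteq> (\<Union>y\<in>k. ball y e)" if "e > 0" for e
  proof -
    have "e/3 > 0"
      using \<open>e > 0\<close> by simp
    then obtain C where "compact C" and S_near_C: "\<forall>z\<in>S. \<exists>c\<in>C. dist z c \<le> e/3"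
      using near by blast
    obtain k where k: "finite k" "C \<subseteq> (\<Union>y\<in>k. ball y (e/3))"
      using compact_eq_totally_bounded[THEN iffD1, OF \<open>compact C\<close>] \<open>e/3 > 0\<close> by blast
    have "S \<subseteq> (\<Union>y\<in>k. cball y (2*e/3))"
    proof
      fix z assume "z \<in> S"
      then obtain c where "c \<in> C" "dist z c \<le> e/3"
        using S_near_C by blast
      moreover obtain y where "y \<in> k" "dist y c < e/3"
        using k(2) \<open>c \<in> C\<close> by auto
      moreover have "dist y z \<le> dist y c + dist c z"
        by (rule dist_triangle)
      ultimately show "z \<in> (\<Union>y\<in>k. cball y (2*e/3))"
        by (force simp: dist_commute)
    qed
    then have "closure S \<subseteq> (\<Union>y\<in>k. cball y (2*e/3))"
      using k(1) by (intro closure_minimal) auto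
    also have "\<dots> \<subseteq> (\<Union>y\<in>k. ball y e)"
      using \<open>e > 0\<close> by auto
    finally show ?thesis
      using k(1) by blast
  qed
  then show ?thesis
    unfolding compact_eq_totally_bounded using complete_eq_closed by blast
qed

lemma bohr_B_almost_periodic_near_compact_window:
  fixes F :: "real^'n \<Rightarrow> 'x::real_normed_vector \<Rightarrow> 'y::real_normed_vector"
  assumes "closed I" and "bohr_B_almost_periodic I \<B> F" and "B \<in> \<B>"
    and window: "\<forall>l>0. \<exists>t0\<in>I. \<exists>k>0. \<forall>t\<in>I. \<exists>t0'\<in>I. \<forall>t0''\<in>cball t0' l \<inter> I.
            t - t0'' \<in> cball t0 (k * l) \<inter> I"
    and "\<epsilon> > 0"
  obtains T where "compact T" "T \<subseteq> I" "\<forall>t\<in>I. \<exists>s\<in>T. \<forall>x\<in>B. norm (F t x - F s x) \<le> \<epsilon>"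
proof -
  obtain l where "l > 0" and almost_periods: "\<forall>t0\<in>I. \<exists>\<tau>\<in>cball t0 l \<inter> I.
      \<forall>t\<in>I. \<forall>x\<in>B. norm (F (t + \<tau>) x - F t x) \<le> \<epsilon>"
    using assms(2,3,5) unfolding bohr_B_almost_periodic_def by blast
  then obtain t0 k where t0_k: "\<forall>t\<in>I. \<exists>t0'\<in>I. \<forall>t0''\<in>cball t0' l \<inter> I.
      t - t0'' \<in> cball t0 (k * l) \<inter> I"
    using window by blast
  have "\<exists>s\<in>cball t0 (k * l) \<inter> I. \<forall>x\<in>B. norm (F t x - F s x) \<le> \<epsilon>" if "t \<in> I" for t
  proof -
    obtain t0' where "t0' \<in> I" and t0': "\<forall>t0''\<in>cball t0' l \<inter> I. t - t0'' \<in> cball t0 (k * l) \<inter> I"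
      using t0_k \<open>t \<in> I\<close> by blast
    then obtain \<tau> where "\<tau> \<in> cball t0' l \<inter> I"
      and \<tau>: "\<forall>s\<in>I. \<forall>x\<in>B. norm (F (s + \<tau>) x - F s x) \<le> \<epsilon>"
      using almost_periods by blast
    then have "t - \<tau> \<in> cball t0 (k * l) \<inter> I"
      using t0' by blast
    moreover have "\<forall>x\<in>B. norm (F t x - F (t - \<tau>) x) \<le> \<epsilon>"
      using \<tau> calculation by (metis IntE diff_add_cancel)
    ultimately show ?thesis
      by blast
  qed
  moreover have "compact (cball t0 (k * l) \<inter> I)"
    using \<open>closed I\<close> by (simp add: compact_Int_closed)
  ultimately show ?thesis
    using that[of "cball t0 (k * l) \<inter> I"] by blast
qed

theorem proposition2p16:
  fixes I :: "(real^'n) set"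
    and \<B> :: "'x::banach set set"
    and F :: "real^'n \<Rightarrow> 'x \<Rightarrow> 'y::banach"
  assumes "I \<noteq> {}" and "closed I"
    and "\<forall>a\<in>I. \<forall>b\<in>I. a + b \<in> I"
    and "\<forall>B\<in>\<B>. compact B"
    and "\<forall>x. \<exists>B\<in>\<B>. x \<in> B"
    and "bohr_B_almost_periodic I \<B> F"
    and "\<forall>l>0. \<exists>t0\<in>I. \<exists>k>0. \<forall>t\<in>I. \<exists>t0'\<in>I. \<forall>t0''\<in>cball t0' l \<inter> I.
            t - t0'' \<in> cball t0 (k * l) \<inter> I"
  shows "\<forall>B\<in>\<B>. compact (closure {F t x | t x. t \<in> I \<and> x \<in> B}) \<and>
                 (\<exists>M. \<forall>t\<in>I. \<forall>x\<in>B. norm (F t x) \<le> M)"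
proof
  fix B assume "B \<in> \<B>"
  let ?S = "{F t x | t x. t \<in> I \<and> x \<in> B}"
  have continuous: "continuous_on (I \<times> UNIV) (\<lambda>(t, x). F t x)"
    using assms(6) by (simp add: bohr_B_almost_periodic_def)
  have "compact (closure ?S)"
  proof (rule compact_closure_if_near_compacts)
    fix e :: real assume "e > 0"
    then obtain T where "compact T" "T \<subseteq> I" and near: "\<forall>t\<in>I. \<exists>s\<in>T. \<forall>x\<in>B. norm (F t x - F s x) \<le> e"
      using bohr_B_almost_periodic_near_compact_window[OF assms(2,6) \<open>B \<in> \<B>\<close> assms(7)] by blast
    have "compact ((\<lambda>(t, x). F t x) ` (T \<times> B))"
      using \<open>compact T\<close> \<open>T \<subseteq> I\<close> \<open>B \<in> \<B>\<close> assms(4)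
      by (intro compact_continuous_image compact_Times continuous_on_subset[OF continuous]) auto
    moreover have "\<forall>z\<in>?S. \<exists>c\<in>(\<lambda>(t, x). F t x) ` (T \<times> B). dist z c \<le> e"
      using near by (fastforce simp: dist_norm)
    ultimately show "\<exists>C. compact C \<and> (\<forall>z\<in>?S. \<exists>c\<in>C. dist z c \<le> e)"
      by blast
  qed
  moreover have "bounded ?S"
    using calculation compact_imp_bounded bounded_subset closure_subset by blast
  then have "\<exists>M. \<forall>t\<in>I. \<forall>x\<in>B. norm (F t x) \<le> M"
    unfolding bounded_iff by blast
  ultimately show "compact (closure ?S) \<and> (\<exists>M. \<forall>t\<in>I. \<forall>x\<in>B. norm (F t x) \<le> M)"
    by blast
qed

end
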